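(* Let $(X_n)_{n\in\mathbb N}$ be a stationary $\mathbb R^d$-valued process which is $\Theta,r$-multiple mixing with respect to $\mathcal G$, and suppose there is $p\in\mathbb N^*$ with $\sum_{i=0}^\infty i^{2p-2}\Theta(i)<\infty$. Then there is a constant $C>0$ such that for all $f\in\mathcal G$ with $\|f\|_\infty\le1$ and all $n\in\mathbb N^*$, $${\rm E}\Big|\sum_{i=1}^n\big(f(X_i)-{\rm E}f(X_0)\big)\Big|^{2p}\le C\sum_{i=1}^p n^i\,\|f(X_0)-{\rm E}f(X_0)\|_r^i\,\|f-{\rm E}f(X_0)\|_{\mathcal G}^i.$$
   Context: $\mathcal G$ is a vector space of measurable real functions on $\mathbb R^d$ containing the constants, with a seminorm $\|\cdot\|_{\mathcal G}$; $\|\cdot\|_r$ is the $L^r$ norm. Multiple mixing: for integers $i_1,\dots,i_j$ write $i_j^*=i_1+\dots+i_j$. $(X_i)$ is $\Theta,r$-multiple mixing with respect to $\mathcal G$ if $r\in[1,\infty)$, $\Theta:\mathbb N\to\mathbb R_0^+$ is nonincreasing, and for every $p\in\mathbb N^*$ there is $K_p<\infty$ such that $$\big|{\rm Cov}\big(f(X_0)f(X_{i_1^*})\cdots f(X_{i_{q-1}^*}),\,f(X_{i_q^*})f(X_{i_{q+1}^*})\cdots f(X_{i_p^*})\big)\big|\le K_p\|f(X_0)\|_r\|f\|_{\mathcal G}\Theta(i_q)$$ for all $f\in\mathcal G$ with $\|f\|_\infty\le1$ and ${\rm E}f(X_0)=0$, all $i_1,\dots,i_p\in\mathbb N$ and all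 $q\in\{1,\dots,p\}$. *)

theory Defs
  imports "HOL-Probability.Probability"
begin

definition seminormed_function_space ::
  "('b::topological_space \<Rightarrow> real) set \<Rightarrow> (('b \<Rightarrow> real) \<Rightarrow> real) \<Rightarrow> bool" where
  "seminormed_function_space G nG \<longleftrightarrow>
     G \<subseteq> borel_measurable borel \<and>
     (\<forall>c::real. (\<lambda>_. c) \<in> G) \<and>
     (\<forall>f\<in>G. \<forall>g\<in>G. (\<lambda>x. f x + g x) \<in> G) \<and>
     (\<forall>f\<in>G. \<forall>c::real. (\<lambda>x. c * f x) \<in> G) \<and>
     (\<forall>f\<in>G. 0 \<le> nG f) \<and>
     (\<forall>f\<in>G. \<forall>g\<in>G. nG (\<lambda>x. f x + g x) \<le> nG f + nG g) \<and>
     (\<forall>f\<in>G. \<forall>c::real. nG (\<lambda>x. c * f x) = \<bar>c\<bar> * nG f)"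

definition Lr_norm :: "'a measure \<Rightarrow> real \<Rightarrow> ('a \<Rightarrow> real) \<Rightarrow> real" where
  "Lr_norm M r Y = (\<integral>\<omega>. \<bar>Y \<omega>\<bar> powr r \<partial>M) powr (1 / r)"

definition cov :: "'a measure \<Rightarrow> ('a \<Rightarrow> real) \<Rightarrow> ('a \<Rightarrow> real) \<Rightarrow> real" where
  "cov M Y Z = (\<integral>\<omega>. Y \<omega> * Z \<omega> \<partial>M) - (\<integral>\<omega>. Y \<omega> \<partial>M) * (\<integral>\<omega>. Z \<omega> \<partial>M)"

definition stationary :: "'a measure \<Rightarrow> (nat \<Rightarrow> 'a \<Rightarrow> 'b::topological_space) \<Rightarrow> bool" where
  "stationary M X \<longleftrightarrow>
     (\<forall>m n. distr M (PiM {..n} (\<lambda>_. borel)) (\<lambda>\<omega>. \<lambda>i\<in>{..n}. X (m + i) \<omega>)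
          = distr M (PiM {..n} (\<lambda>_. borel)) (\<lambda>\<omega>. \<lambda>i\<in>{..n}. X i \<omega>))"

text \<open>The gaps are given by a
  function i :: nat => nat (only i 1, ..., i p matter); the partial sums are
  i_j^* = i 1 + ... + i j, with i_0^* = 0; the sup norm bound is pointwise.\<close>
definition multiple_mixing ::
  "'a measure \<Rightarrow> (nat \<Rightarrow> 'a \<Rightarrow> 'b::topological_space) \<Rightarrow> ('b \<Rightarrow> real) set \<Rightarrow>
   (('b \<Rightarrow> real) \<Rightarrow> real) \<Rightarrow> (nat \<Rightarrow> real) \<Rightarrow> real \<Rightarrow> bool" where
  "multiple_mixing M X G nG \<Theta> r \<longleftrightarrow>
     1 \<le> r \<and> antimono \<Theta> \<and> (\<forall>k. 0 \<le> \<Theta> k) \<and>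
     (\<forall>p::nat. p \<ge> 1 \<longrightarrow> (\<exists>K::real.
        \<forall>f\<in>G. (\<forall>x. \<bar>f x\<bar> \<le> 1) \<longrightarrow> (\<integral>\<omega>. f (X 0 \<omega>) \<partial>M) = 0 \<longrightarrow>
        (\<forall>i::nat \<Rightarrow> nat. \<forall>q\<in>{1..p}.
          \<bar>cov M (\<lambda>\<omega>. \<Prod>j\<in>{0..<q}. f (X (\<Sum>l\<in>{1..j}. i l) \<omega>))
                  (\<lambda>\<omega>. \<Prod>j\<in>{q..p}. f (X (\<Sum>l\<in>{1..j}. i l) \<omega>))\<bar>
          \<le> K * Lr_norm M r (\<lambda>\<omega>. f (X 0 \<omega>)) * nG f * \<Theta> (i q))))"

end

theory Submission
  imports Defs "HOL-Combinatorics.Permutations"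
begin

text \<open>
  For a bounded centred h the moment E (h(X_1) + ... + h(X_n))^m is a sum of
  mixed moments E h(X_{i_1})...h(X_{i_m}) over index lists; by symmetry it is bounded by
  m! times the sum A_m(n) of the absolute mixed moments over SORTED index lists.
  For a sorted list we split it at its largest gap q: multiple mixing bounds the
  difference between the mixed moment and the product of the moments of the two halves
  by K L N Theta(largest gap), where L N is the product of the L^r norm and the seminorm
  of h.  Summing over sorted lists gives the recursion
     A_m(n) <= c n L N + sum_{q=1}^{m-1} A_q(n) A_{m-q}(n),    A_1(n) = 0,
  (the constant c uses the summability of i^(2p-2) Theta(i)), and an induction on m
  solves it as A_m(n) <= D (b + b^(m div 2)) with b = n L N.  Finally a bounded f is
  reduced to the centred function g = (f - E f(X_0)) / 2, which has sup norm at most 1.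
\<close>

section \<open>Index lists\<close>

definition index_lists :: "nat \<Rightarrow> nat set \<Rightarrow> nat list set" where
  "index_lists m A = {xs. set xs \<subseteq> A \<and> length xs = m}"

lemma finite_index_lists: "finite A \<Longrightarrow> finite (index_lists m A)"
  unfolding index_lists_def by (rule finite_lists_length_eq)

lemma card_index_lists: "finite A \<Longrightarrow> card (index_lists m A) = card A ^ m"
  unfolding index_lists_def by (rule card_lists_length_eq)

lemma index_lists_Suc: "index_lists (Suc m) A = (\<lambda>(x, xs). x # xs) ` (A \<times> index_lists m A)"
proof
  show "index_lists (Suc m) A \<subseteq> (\<lambda>(x, xs). x # xs) ` (A \<times> index_lists m A)"
  proof
    fix xs assume "xs \<in> index_lists (Suc m) A"
    then obtain y ys where "xs = y # ys" "y \<in> A" "ys \<in> index_lists m A"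
      unfolding index_lists_def by (cases xs) auto
    then show "xs \<in> (\<lambda>(x, xs). x # xs) ` (A \<times> index_lists m A)" by force
  qed
qed (auto simp: index_lists_def)

lemma power_sum_index_lists:
  fixes Y :: "nat \<Rightarrow> real"
  assumes "finite A"
  shows "(\<Sum>i\<in>A. Y i) ^ m = (\<Sum>xs\<in>index_lists m A. prod_list (map Y xs))"
proof (induction m)
  case 0
  have "index_lists 0 A = {[]}" by (auto simp: index_lists_def)
  then show ?case by simp
next
  case (Suc m)
  have inj: "inj_on (\<lambda>(x, xs). x # xs) (A \<times> index_lists m A)" by (auto simp: inj_on_def)
  have "(\<Sum>xs\<in>index_lists (Suc m) A. prod_list (map Y xs))
      = (\<Sum>x\<in>A. \<Sum>xs\<in>index_lists m A. Y x * prod_list (map Y xs))"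
    unfolding index_lists_Suc sum.reindex[OF inj]
    by (simp only: sum.cartesian_product) (rule sum.cong, auto)
  also have "\<dots> = (\<Sum>i\<in>A. Y i) * (\<Sum>xs\<in>index_lists m A. prod_list (map Y xs))"
    by (simp add: sum_product)
  finally show ?case using Suc by simp
qed

text \<open>Sorted index lists: one representative of each multiset of indices.\<close>
definition sorted_index_lists :: "nat \<Rightarrow> nat set \<Rightarrow> nat list set" where
  "sorted_index_lists m A = {xs. sorted xs \<and> set xs \<subseteq> A \<and> length xs = m}"

lemma finite_sorted_index_lists: "finite A \<Longrightarrow> finite (sorted_index_lists m A)"
  by (rule finite_subset[OF _ finite_index_lists[of A m]])
    (auto simp: sorted_index_lists_def index_lists_def)

lemma card_rearrangements_le: "card {xs. mset xs = mset ys} \<le> fact (length ys)"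
proof -
  let ?P = "{p. p permutes {..<length ys}}"
  have "{xs. mset xs = mset ys} \<subseteq> (\<lambda>p. permute_list p ys) ` ?P"
    using mset_eq_permutation by blast
  then have "card {xs. mset xs = mset ys} \<le> card ((\<lambda>p. permute_list p ys) ` ?P)"
    by (rule card_mono[rotated]) (intro finite_imageI finite_permutations, simp)
  also have "\<dots> \<le> card ?P" by (rule card_image_le) (intro finite_permutations, simp)
  also have "\<dots> = fact (length ys)" by (rule card_permutations) simp_all
  finally show ?thesis .
qed

lemma sum_sort_le:
  fixes \<phi> :: "nat list \<Rightarrow> real"
  assumes A: "finite A" and nn: "\<And>ys. 0 \<le> \<phi> ys"
  shows "(\<Sum>xs\<in>index_lists m A. \<phi> (sort xs)) \<le> fact m * (\<Sum>ys\<in>sorted_index_lists m A. \<phi> ys)"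
proof -
  have fin: "finite (index_lists m A)" using A by (rule finite_index_lists)
  have fiber: "real (card {xs\<in>index_lists m A. sort xs = ys}) \<le> fact m"
    if "ys \<in> sort ` index_lists m A" for ys
  proof -
    have len: "length ys = m" and sA: "set ys \<subseteq> A" using that by (auto simp: index_lists_def)
    have "{xs. mset xs = mset ys} \<subseteq> index_lists m A"
      using sA len by (auto simp: index_lists_def dest: mset_eq_setD mset_eq_length)
    then have "card {xs\<in>index_lists m A. sort xs = ys} \<le> card {xs. mset xs = mset ys}"
      by (intro card_mono finite_subset[OF _ fin]) auto
    also have "\<dots> \<le> fact m" using card_rearrangements_le[of ys] len by simp
    finally have "real (card {xs\<in>index_lists m A. sort xs = ys}) \<le> real (fact m)"
      by (simp only: of_nat_le_iff)
    then show ?thesis by simp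
  qed
  have "(\<Sum>xs\<in>index_lists m A. \<phi> (sort xs))
      = (\<Sum>ys\<in>sort ` index_lists m A. \<Sum>xs\<in>{xs\<in>index_lists m A. sort xs = ys}. \<phi> (sort xs))"
    by (rule sum.image_gen[OF fin])
  also have "\<dots> = (\<Sum>ys\<in>sort ` index_lists m A. real (card {xs\<in>index_lists m A. sort xs = ys}) * \<phi> ys)"
    by (rule sum.cong) simp_all
  also have "\<dots> \<le> (\<Sum>ys\<in>sort ` index_lists m A. fact m * \<phi> ys)"
    by (intro sum_mono mult_right_mono fiber nn)
  also have "\<dots> \<le> fact m * (\<Sum>ys\<in>sorted_index_lists m A. \<phi> ys)"
    unfolding sum_distrib_left[symmetric]
    by (intro mult_left_mono sum_mono2 finite_sorted_index_lists A nn)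
      (auto simp: sorted_index_lists_def index_lists_def)
  finally show ?thesis .
qed

section \<open>Gaps of sorted lists\<close>

definition gaps :: "nat list \<Rightarrow> nat list" where
  "gaps ys = map (\<lambda>j. ys ! Suc j - ys ! j) [0..<length ys - 1]"

definition list_max :: "nat list \<Rightarrow> nat" where
  "list_max d = Max (insert 0 (set d))"

lemma length_gaps: "length (gaps ys) = length ys - 1"
  by (simp add: gaps_def)

lemma nth_gaps: "j < length ys - 1 \<Longrightarrow> gaps ys ! j = ys ! Suc j - ys ! j"
  by (simp add: gaps_def)

lemma list_max_ge: "x \<in> set d \<Longrightarrow> x \<le> list_max d"
  unfolding list_max_def by (rule Max_ge) simp_all

lemma list_max_in: "list_max d \<in> insert 0 (set d)"
  unfolding list_max_def by (rule Max_in) simp_all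

lemma list_max_mem: "d \<noteq> [] \<Longrightarrow> list_max d \<in> set d"
  using list_max_in[of d] list_max_ge[of _ d] by (cases d) force+

lemma sorted_first_le: "sorted ys \<Longrightarrow> i \<in> set ys \<Longrightarrow> ys ! 0 \<le> i"
  by (auto simp: in_set_conv_nth sorted_iff_nth_mono)

lemma sorted_eq_by_gaps:
  assumes "sorted ys" "sorted zs" "length ys = length zs" "ys ! 0 = zs ! 0" "gaps ys = gaps zs"
  shows "ys = zs"
proof (rule nth_equalityI)
  show "length ys = length zs" by fact
  show "ys ! j = zs ! j" if "j < length ys" for j
    using that
  proof (induction j)
    case (Suc j)
    then have j: "j < length ys - 1" by simp
    have "ys ! j \<le> ys ! Suc j" "zs ! j \<le> zs ! Suc j"
      using assms(1-3) Suc.prems by (simp_all add: sorted_iff_nth_mono)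
    moreover have "ys ! Suc j - ys ! j = zs ! Suc j - zs ! j"
      using nth_gaps[OF j] nth_gaps[of j zs] j assms(3,5) by simp
    moreover have "ys ! j = zs ! j" using Suc by simp
    ultimately show ?case by linarith
  qed (use assms in simp)
qed

lemma sum_gaps_sorted:
  fixes zs :: "nat list"
  assumes "sorted zs" "j < length zs"
  shows "(\<Sum>l\<in>{1..j}. zs ! l - zs ! (l - 1)) = zs ! j - zs ! 0"
  using assms(2)
proof (induction j)
  case (Suc j)
  have "zs ! 0 \<le> zs ! j" "zs ! j \<le> zs ! Suc j"
    using assms(1) Suc.prems by (simp_all add: sorted_iff_nth_mono)
  then show ?case using Suc by (simp add: sum.cl_ivl_Suc)
qed simp

text \<open>Lists of length k with entries in {0..N} and maximum r: at most k (r+1)^(k-1),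
  since such a list is a list with entries in {0..r} with r inserted somewhere.\<close>
lemma card_list_max_eq_le:
  assumes "k \<ge> 1"
  shows "card {d\<in>index_lists k {0..N}. list_max d = r} \<le> k * (r + 1) ^ (k - 1)"
proof -
  let ?ins = "\<lambda>j e. take j e @ r # drop j e"
  have "{d\<in>index_lists k {0..N}. list_max d = r} \<subseteq> (\<Union>j<k. ?ins j ` index_lists (k - 1) {0..r})"
  proof
    fix d assume "d \<in> {d\<in>index_lists k {0..N}. list_max d = r}"
    then have d: "length d = k" "list_max d = r" by (auto simp: index_lists_def)
    then have "d \<noteq> []" using assms by auto
    then have "r \<in> set d" using list_max_mem d(2) by blast
    then obtain j where j: "j < length d" "d ! j = r" by (auto simp: in_set_conv_nth)
    define e where "e = take j d @ drop (Suc j) d"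
    have "set e \<subseteq> set d" unfolding e_def using set_take_subset set_drop_subset by fastforce
    moreover have "x \<le> r" if "x \<in> set d" for x using list_max_ge[OF that] d(2) by simp
    ultimately have "set e \<subseteq> {0..r}" by auto
    then have "e \<in> index_lists (k - 1) {0..r}" unfolding index_lists_def e_def using j d(1) by simp
    moreover have "?ins j e = d" unfolding e_def using j id_take_nth_drop[OF j(1)] by simp
    ultimately show "d \<in> (\<Union>j<k. ?ins j ` index_lists (k - 1) {0..r})" using j d(1) by force
  qed
  then have "card {d\<in>index_lists k {0..N}. list_max d = r}
      \<le> card (\<Union>j<k. ?ins j ` index_lists (k - 1) {0..r})"
    by (rule card_mono[rotated]) (intro finite_UN_I finite_lessThan finite_imageI finite_index_lists finite_atLeastAtMost)
  also have "\<dots> \<le> (\<Sum>j<k. card (?ins j ` index_lists (k - 1) {0..r}))" by (rule card_UN_le) simp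
  also have "\<dots> \<le> (\<Sum>j<k. card (index_lists (k - 1) {0..r}))"
    by (intro sum_mono card_image_le finite_index_lists) simp
  also have "\<dots> = k * (r + 1) ^ (k - 1)" by (simp add: card_index_lists)
  finally show ?thesis .
qed

lemma sum_list_max_le:
  fixes \<Theta> :: "nat \<Rightarrow> real"
  assumes "k \<ge> 1" and nn: "\<And>i. 0 \<le> \<Theta> i"
  shows "(\<Sum>d\<in>index_lists k {0..N}. \<Theta> (list_max d)) \<le> real k * (\<Sum>r\<in>{0..N}. (real r + 1) ^ (k - 1) * \<Theta> r)"
proof -
  have img: "list_max ` index_lists k {0..N} \<subseteq> {0..N}"
  proof
    fix x assume "x \<in> list_max ` index_lists k {0..N}"
    then obtain d where "d \<in> index_lists k {0..N}" "x = list_max d" by blast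
    then show "x \<in> {0..N}" using list_max_in[of d] by (auto simp: index_lists_def)
  qed
  have card: "real (card {d\<in>index_lists k {0..N}. list_max d = r}) \<le> real k * (real r + 1) ^ (k - 1)" for r
  proof -
    have "real (card {d\<in>index_lists k {0..N}. list_max d = r}) \<le> real (k * (r + 1) ^ (k - 1))"
      by (simp only: of_nat_le_iff card_list_max_eq_le[OF assms(1)])
    then show ?thesis by (simp add: add.commute)
  qed
  have "(\<Sum>d\<in>index_lists k {0..N}. \<Theta> (list_max d))
      = (\<Sum>r\<in>{0..N}. real (card {d\<in>index_lists k {0..N}. list_max d = r}) * \<Theta> r)"
    by (subst sum.group[symmetric, OF finite_index_lists _ img]) (simp_all add: finite_index_lists)
  also have "\<dots> \<le> (\<Sum>r\<in>{0..N}. (real k * (real r + 1) ^ (k - 1)) * \<Theta> r)"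
    by (intro sum_mono mult_right_mono card nn)
  also have "\<dots> = real k * (\<Sum>r\<in>{0..N}. (real r + 1) ^ (k - 1) * \<Theta> r)"
    by (simp add: sum_distrib_left mult.assoc)
  finally show ?thesis .
qed

text \<open>Summing a weight of the largest gap over sorted lists in {1..n}: a sorted list is
  encoded by its first entry (n choices) and its gap list (entries in {0..n}).\<close>
lemma sum_max_gap_le:
  fixes \<Theta> :: "nat \<Rightarrow> real"
  assumes "m \<ge> 2" and nn: "\<And>i. 0 \<le> \<Theta> i"
  shows "(\<Sum>ys\<in>sorted_index_lists m {1..n}. \<Theta> (list_max (gaps ys)))
     \<le> real n * (real (m - 1) * (\<Sum>r\<in>{0..n}. (real r + 1) ^ (m - 2) * \<Theta> r))"
proof -
  let ?code = "\<lambda>ys. (ys ! 0, gaps ys)"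
  have inj: "inj_on ?code (sorted_index_lists m {1..n})"
    by (rule inj_onI) (rule sorted_eq_by_gaps, auto simp: sorted_index_lists_def)
  have img: "?code ` sorted_index_lists m {1..n} \<subseteq> {1..n} \<times> index_lists (m - 1) {0..n}"
  proof clarify
    fix ys assume ys: "ys \<in> sorted_index_lists m {1..n}"
    then have s: "set ys \<subseteq> {1..n}" "length ys = m" unfolding sorted_index_lists_def by simp_all
    have "ys ! 0 \<in> set ys" using s(2) assms(1) by simp
    then have "ys ! 0 \<in> {1..n}" using s(1) by blast
    moreover have "set (gaps ys) \<subseteq> {0..n}"
    proof
      fix x assume "x \<in> set (gaps ys)"
      then obtain j where j: "j < length ys - 1" "x = ys ! Suc j - ys ! j" by (auto simp: gaps_def)
      then have "Suc j < length ys" by simp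
      then have "ys ! Suc j \<in> {1..n}" using s(1) nth_mem by blast
      then show "x \<in> {0..n}" using j by auto
    qed
    ultimately show "ys ! 0 \<in> {1..n} \<and> gaps ys \<in> index_lists (m - 1) {0..n}"
      using s by (simp add: index_lists_def length_gaps)
  qed
  have "(\<Sum>ys\<in>sorted_index_lists m {1..n}. \<Theta> (list_max (gaps ys)))
      = (\<Sum>z\<in>?code ` sorted_index_lists m {1..n}. \<Theta> (list_max (snd z)))"
    by (subst sum.reindex[OF inj]) (simp add: comp_def)
  also have "\<dots> \<le> (\<Sum>z\<in>{1..n} \<times> index_lists (m - 1) {0..n}. \<Theta> (list_max (snd z)))"
    by (rule sum_mono2[OF _ img]) (simp_all add: finite_index_lists nn)
  also have "\<dots> = (\<Sum>x\<in>{1..n}. \<Sum>d\<in>index_lists (m - 1) {0..n}. \<Theta> (list_max d))"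
    by (simp only: sum.cartesian_product) (rule sum.cong, auto)
  also have "\<dots> = real n * (\<Sum>d\<in>index_lists (m - 1) {0..n}. \<Theta> (list_max d))"
    by simp
  also have "\<dots> \<le> real n * (real (m - 1) * (\<Sum>r\<in>{0..n}. (real r + 1) ^ (m - 1 - 1) * \<Theta> r))"
    by (rule mult_left_mono[OF sum_list_max_le]) (use assms in simp_all)
  finally show ?thesis by (simp add: numeral_2_eq_2)
qed

lemma weighted_sum_le_series:
  fixes \<Theta> :: "nat \<Rightarrow> real"
  assumes nn: "\<And>i. 0 \<le> \<Theta> i" and sm: "summable (\<lambda>i. real i ^ k * \<Theta> i)" and e: "e \<le> k"
  shows "(\<Sum>r\<in>{0..N}. (real r + 1) ^ e * \<Theta> r) \<le> \<Theta> 0 + 2 ^ k * (\<Sum>i. real i ^ k * \<Theta> i)"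
proof -
  have pointwise: "(real r + 1) ^ e * \<Theta> r \<le> 2 ^ k * (real r ^ k * \<Theta> r) + (if r = 0 then \<Theta> 0 else 0)" for r
  proof (cases "r = 0")
    case False
    then have r1: "1 \<le> real r" by simp
    have "(real r + 1) ^ e \<le> (2 * real r) ^ k"
      using power_mono[of "real r + 1" "2 * real r" e] power_increasing[OF e, of "2 * real r"] r1 by simp
    then have "(real r + 1) ^ e * \<Theta> r \<le> (2 * real r) ^ k * \<Theta> r" by (rule mult_right_mono) (rule nn)
    then show ?thesis using False by (simp add: power_mult_distrib mult.assoc)
  qed (use nn in simp)
  have "(\<Sum>r\<in>{0..N}. (real r + 1) ^ e * \<Theta> r)
      \<le> (\<Sum>r\<in>{0..N}. 2 ^ k * (real r ^ k * \<Theta> r) + (if r = 0 then \<Theta> 0 else 0))"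
    by (rule sum_mono) (rule pointwise)
  also have "\<dots> = 2 ^ k * (\<Sum>r\<in>{0..N}. real r ^ k * \<Theta> r) + \<Theta> 0"
    by (simp add: sum.distrib sum_distrib_left)
  also have "\<dots> \<le> 2 ^ k * (\<Sum>i. real i ^ k * \<Theta> i) + \<Theta> 0"
    by (intro add_right_mono mult_left_mono sum_le_suminf[OF sm]) (simp_all add: nn)
  finally show ?thesis by simp
qed

text \<open>Products over the first q entries and over the remaining entries of a list,
  written as products over index ranges (the form used in the mixing hypothesis).\<close>
lemma prod_list_map_take:
  fixes f :: "nat \<Rightarrow> real"
  assumes "q \<le> length zs"
  shows "prod_list (map f (take q zs)) = (\<Prod>j\<in>{0..<q}. f (zs ! j))"
  unfolding prod.list_conv_set_nth using assms by (intro prod.cong) simp_all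

lemma prod_list_map_drop:
  fixes f :: "nat \<Rightarrow> real"
  assumes "q \<le> length zs"
  shows "prod_list (map f (drop q zs)) = (\<Prod>j\<in>{q..<length zs}. f (zs ! j))"
proof -
  have "prod_list (map f (drop q zs)) = (\<Prod>j\<in>{0..<length zs - q}. f (zs ! (q + j)))"
    unfolding prod.list_conv_set_nth using assms by (intro prod.cong) simp_all
  also have "\<dots> = (\<Prod>j\<in>{q..<length zs}. f (zs ! j))"
    by (subst prod.atLeastLessThan_shift_0) (simp add: comp_def)
  finally show ?thesis .
qed

section \<open>Solving the moment recursion\<close>

lemma power_le_sum_extremes:
  fixes b :: real
  assumes "0 \<le> b" "1 \<le> e" "e \<le> k"
  shows "b ^ e \<le> b + b ^ k"
proof (cases "b \<le> 1")
  case True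
  then have "b ^ e \<le> b ^ 1" by (intro power_decreasing) (use assms in simp_all)
  then show ?thesis using zero_le_power[OF assms(1), of k] by simp
next
  case False
  then have "b ^ e \<le> b ^ k" by (intro power_increasing[OF assms(3)]) simp
  then show ?thesis using assms(1) by simp
qed

lemma product_of_bounds_le:
  fixes b x y Dx Dy :: real
  assumes b: "0 \<le> b" and x: "0 \<le> x" "x \<le> Dx * (b + b ^ i)" and y: "0 \<le> y" "y \<le> Dy * (b + b ^ j)"
    and ij: "1 \<le> i" "1 \<le> j" "i + j \<le> k" and D: "0 \<le> Dx" "0 \<le> Dy"
  shows "x * y \<le> 4 * (Dx * Dy) * (b + b ^ k)"
proof -
  have "x * y \<le> (Dx * (b + b ^ i)) * (Dy * (b + b ^ j))"
    by (rule mult_mono) (use x y in simp_all)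
  also have "\<dots> = (Dx * Dy) * (b ^ 2 + b ^ (j + 1) + b ^ (i + 1) + b ^ (i + j))"
    by (simp add: algebra_simps power_add power2_eq_square)
  also have "\<dots> \<le> (Dx * Dy) * (4 * (b + b ^ k))"
  proof (rule mult_left_mono)
    have "b ^ 2 \<le> b + b ^ k" "b ^ (j + 1) \<le> b + b ^ k" "b ^ (i + 1) \<le> b + b ^ k"
      "b ^ (i + j) \<le> b + b ^ k"
      by (rule power_le_sum_extremes[OF b]; use ij in simp)+
    then show "b ^ 2 + b ^ (j + 1) + b ^ (i + 1) + b ^ (i + j) \<le> 4 * (b + b ^ k)" by simp
  qed (use D in simp)
  finally show ?thesis by (simp add: mult_ac)
qed

lemma recursion_bound:
  fixes A :: "'h \<Rightarrow> nat \<Rightarrow> nat \<Rightarrow> real" and b :: "'h \<Rightarrow> nat \<Rightarrow> real"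
  assumes rec: "\<And>m h n. 2 \<le> m \<Longrightarrow> m \<le> P \<Longrightarrow> h \<in> H \<Longrightarrow>
        A h n m \<le> c * b h n + (\<Sum>q\<in>{1..<m}. A h n q * A h n (m - q))"
    and A1: "\<And>h n. h \<in> H \<Longrightarrow> A h n 1 = 0"
    and nonneg: "\<And>h n m. 0 \<le> A h n m" and bn: "\<And>h n. h \<in> H \<Longrightarrow> 0 \<le> b h n" and c: "0 \<le> c"
  shows "1 \<le> m \<Longrightarrow> m \<le> P \<Longrightarrow> \<exists>D\<ge>0. \<forall>h\<in>H. \<forall>n. A h n m \<le> D * (b h n + b h n ^ (m div 2))"
proof (induction m rule: less_induct)
  case (less m)
  show ?case
  proof (cases "m = 1")
    case True
    then show ?thesis using A1 by (intro exI[of _ 0]) simp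
  next
    case False
    then have m2: "2 \<le> m" using less.prems by simp
    have "\<forall>q\<in>{1..<m}. \<exists>D\<ge>0. \<forall>h\<in>H. \<forall>n. A h n q \<le> D * (b h n + b h n ^ (q div 2))"
      using less.IH less.prems by simp
    then obtain Df where Df0: "\<And>q. q \<in> {1..<m} \<Longrightarrow> 0 \<le> Df q"
      and Df: "\<And>q h n. q \<in> {1..<m} \<Longrightarrow> h \<in> H \<Longrightarrow> A h n q \<le> Df q * (b h n + b h n ^ (q div 2))"
      by metis
    define D where "D = c + (\<Sum>q\<in>{1..<m}. 4 * (Df q * Df (m - q)))"
    have DD: "0 \<le> Df q * Df (m - q)" if "q \<in> {1..<m}" for q
      using Df0[OF that] Df0[of "m - q"] that by (auto intro!: mult_nonneg_nonneg)
    have "A h n m \<le> D * (b h n + b h n ^ (m div 2))" if h: "h \<in> H" for h n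
    proof -
      let ?b = "b h n" and ?k = "m div 2"
      have bk: "0 \<le> ?b + ?b ^ ?k" using bn[OF h, of n] by simp
      have summand: "A h n q * A h n (m - q) \<le> 4 * (Df q * Df (m - q)) * (?b + ?b ^ ?k)"
        if q: "q \<in> {1..<m}" for q
      proof (cases "q = 1 \<or> m - q = 1")
        case True
        then have "A h n q * A h n (m - q) = 0" using A1[OF h] by auto
        moreover have "0 \<le> 4 * (Df q * Df (m - q)) * (?b + ?b ^ ?k)" using DD[OF q] bk by simp
        ultimately show ?thesis by linarith
      next
        case False
        have q': "m - q \<in> {1..<m}" using q by auto
        show ?thesis
        proof (rule product_of_bounds_le[OF bn[OF h] nonneg Df[OF q h] nonneg Df[OF q' h]])
          show "1 \<le> q div 2" "1 \<le> (m - q) div 2" using False q by auto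
          show "q div 2 + (m - q) div 2 \<le> m div 2" using q by auto
        qed (use Df0[OF q] Df0[OF q'] in simp_all)
      qed
      have "A h n m \<le> c * ?b + (\<Sum>q\<in>{1..<m}. A h n q * A h n (m - q))"
        by (rule rec[OF m2 less.prems(2) h])
      also have "\<dots> \<le> c * (?b + ?b ^ ?k) + (\<Sum>q\<in>{1..<m}. 4 * (Df q * Df (m - q)) * (?b + ?b ^ ?k))"
        by (intro add_mono mult_left_mono sum_mono summand) (use c bn[OF h, of n] in simp_all)
      also have "\<dots> = D * (?b + ?b ^ ?k)"
        unfolding D_def by (simp add: distrib_right sum_distrib_right)
      finally show ?thesis .
    qed
    moreover have "0 \<le> D" unfolding D_def using c DD by (intro add_nonneg_nonneg sum_nonneg) simp_all
    ultimately show ?thesis by blast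
  qed
qed

section \<open>Mixed moments of a stationary process\<close>

locale stationary_process =
  fixes M :: "'a measure" and X :: "nat \<Rightarrow> 'a \<Rightarrow> 'd::euclidean_space"
  assumes prob: "prob_space M" and meas: "\<And>n. X n \<in> borel_measurable M"
    and stat: "stationary M X"
begin

definition moment :: "('d \<Rightarrow> real) \<Rightarrow> nat list \<Rightarrow> real" where
  "moment h ys = (\<integral>\<omega>. prod_list (map (\<lambda>i. h (X i \<omega>)) ys) \<partial>M)"

lemma measurable_prod_list:
  fixes h :: "'d \<Rightarrow> real"
  assumes "h \<in> borel_measurable borel"
  shows "(\<lambda>\<omega>. prod_list (map (\<lambda>i. h (X i \<omega>)) ys)) \<in> borel_measurable M"
proof (induction ys)
  case (Cons a ys)
  have "(\<lambda>\<omega>. h (X a \<omega>)) \<in> borel_measurable M" by (rule measurable_compose[OF meas assms])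
  then show ?case using Cons by (auto intro!: borel_measurable_times)
qed simp

lemma abs_prod_list_le_1:
  fixes h :: "'d \<Rightarrow> real"
  assumes "\<And>x. \<bar>h x\<bar> \<le> 1"
  shows "\<bar>prod_list (map (\<lambda>i. h (X i \<omega>)) ys)\<bar> \<le> 1"
proof (induction ys)
  case (Cons a ys)
  have "\<bar>h (X a \<omega>)\<bar> * \<bar>prod_list (map (\<lambda>i. h (X i \<omega>)) ys)\<bar> \<le> 1"
    by (rule mult_le_one) (use assms Cons in simp_all)
  then show ?case by (simp add: abs_mult)
qed simp

lemma integrable_prod_list:
  fixes h :: "'d \<Rightarrow> real"
  assumes "h \<in> borel_measurable borel" "\<And>x. \<bar>h x\<bar> \<le> 1"
  shows "integrable M (\<lambda>\<omega>. prod_list (map (\<lambda>i. h (X i \<omega>)) ys))"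
proof -
  interpret prob_space M by (rule prob)
  show ?thesis
  proof (rule integrable_const_bound[where B=1])
    show "AE \<omega> in M. norm (prod_list (map (\<lambda>i. h (X i \<omega>)) ys)) \<le> 1"
      unfolding real_norm_def by (rule AE_I2) (rule abs_prod_list_le_1[OF assms(2)])
  qed (rule measurable_prod_list[OF assms(1)])
qed

lemma abs_moment_le_1:
  fixes h :: "'d \<Rightarrow> real"
  assumes "\<And>x. \<bar>h x\<bar> \<le> 1"
  shows "\<bar>moment h ys\<bar> \<le> 1"
proof -
  interpret prob_space M by (rule prob)
  have "\<bar>moment h ys\<bar> \<le> (\<integral>\<omega>. \<bar>prod_list (map (\<lambda>i. h (X i \<omega>)) ys)\<bar> \<partial>M)"
    unfolding moment_def by (rule integral_abs_bound)
  also have "\<dots> \<le> (\<integral>\<omega>. 1 \<partial>M)"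
  proof (rule integral_mono_AE')
    show "AE \<omega> in M. \<bar>prod_list (map (\<lambda>i. h (X i \<omega>)) ys)\<bar> \<le> 1"
      by (rule AE_I2) (rule abs_prod_list_le_1[OF assms])
  qed simp_all
  also have "\<dots> = 1" by (simp add: prob_space)
  finally show ?thesis .
qed

text \<open>Stationarity: shifting all indices of a list with entries in {..N} by s does not
  change the mixed moment (pass to the joint law of X_s, ..., X_{s+N}).\<close>
lemma moment_shift_invariant:
  fixes h :: "'d \<Rightarrow> real"
  assumes hm: "h \<in> borel_measurable borel" and zs: "set zs \<subseteq> {..N}"
  shows "moment h (map (\<lambda>i. s + i) zs) = moment h zs"
proof -
  let ?B = "PiM {..N} (\<lambda>_. borel :: 'd measure)"
  define F where "F x = prod_list (map (\<lambda>i. h (x i)) zs)" for x :: "nat \<Rightarrow> 'd"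
  have Fm: "F \<in> borel_measurable ?B"
    unfolding F_def using zs
    by (induction zs) (auto intro!: borel_measurable_times measurable_compose[OF _ hm]
        measurable_component_singleton)
  have law: "moment h (map (\<lambda>i. t + i) zs) = integral\<^sup>L (distr M ?B (\<lambda>\<omega>. \<lambda>i\<in>{..N}. X (t + i) \<omega>)) F"
    for t
  proof -
    have "F (\<lambda>i\<in>{..N}. X (t + i) \<omega>) = prod_list (map (\<lambda>i. h (X i \<omega>)) (map (\<lambda>i. t + i) zs))" for \<omega>
      unfolding F_def using zs by (auto intro!: arg_cong[where f=prod_list])
    then show ?thesis
      unfolding moment_def by (subst integral_distr) (auto intro!: measurable_restrict meas Fm)
  qed
  have "distr M ?B (\<lambda>\<omega>. \<lambda>i\<in>{..N}. X (s + i) \<omega>) = distr M ?B (\<lambda>\<omega>. \<lambda>i\<in>{..N}. X (0 + i) \<omega>)"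
    using stat unfolding stationary_def by simp
  then show ?thesis using law[of s] law[of 0] by simp
qed

lemma moment_shift:
  fixes h :: "'d \<Rightarrow> real"
  assumes hm: "h \<in> borel_measurable borel" and ge: "\<And>i. i \<in> set ys \<Longrightarrow> s \<le> i"
  shows "moment h ys = moment h (map (\<lambda>i. i - s) ys)"
proof -
  have "map (\<lambda>i. s + i) (map (\<lambda>i. i - s) ys) = ys" using ge by (induction ys) auto
  then show ?thesis
    using moment_shift_invariant[OF hm, of "map (\<lambda>i. i - s) ys" "list_max ys" s] list_max_ge[of _ ys]
    by fastforce
qed

text \<open>Suppose the covariance of the two blocks of a product taken along
  the partial sums of gaps i 1, i 2, ... (the shape of the multiple mixing hypothesis) is
  bounded by B Theta(i q).  Then the mixed moment along a sorted list differs from the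
  product of the moments of its first q and its remaining entries by at most
  B Theta(gap between entries q-1 and q): shift the list to start at 0 and read it off
  its own gaps.\<close>
lemma moment_split_bound:
  fixes h :: "'d \<Rightarrow> real" and \<Theta> :: "nat \<Rightarrow> real"
  assumes cov_bound: "\<And>i q. q \<in> {1..length ys - 1} \<Longrightarrow>
      \<bar>cov M (\<lambda>\<omega>. \<Prod>j\<in>{0..<q}. h (X (\<Sum>l\<in>{1..j}. i l) \<omega>))
              (\<lambda>\<omega>. \<Prod>j\<in>{q..length ys - 1}. h (X (\<Sum>l\<in>{1..j}. i l) \<omega>))\<bar> \<le> B * \<Theta> (i q)"
    and hm: "h \<in> borel_measurable borel" and ys: "sorted ys" and q: "1 \<le> q" "q < length ys"
  shows "\<bar>moment h ys - moment h (take q ys) * moment h (drop q ys)\<bar> \<le> B * \<Theta> (ys ! q - ys ! (q - 1))"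
proof -
  define s where "s = ys ! 0"
  define zs where "zs = map (\<lambda>i. i - s) ys"
  define i where "i l = zs ! l - zs ! (l - 1)" for l
  have ge: "\<And>i. i \<in> set ys \<Longrightarrow> s \<le> i" unfolding s_def using sorted_first_le[OF ys] by blast
  have nth_zs: "j < length ys \<Longrightarrow> zs ! j = ys ! j - s" for j unfolding zs_def by simp
  have "sorted zs" unfolding zs_def using ys by (simp add: sorted_iff_nth_mono diff_le_mono)
  moreover have "zs ! 0 = 0" using q by (cases ys) (simp_all add: zs_def s_def)
  ultimately have partial_sums: "(\<Sum>l\<in>{1..j}. i l) = zs ! j" if "j < length ys" for j
    using sum_gaps_sorted[of zs j] that unfolding i_def by (simp add: zs_def)
  let ?Y = "\<lambda>\<omega> i. h (X i \<omega>)"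
  have first: "(\<Prod>j\<in>{0..<q}. h (X (\<Sum>l\<in>{1..j}. i l) \<omega>)) = prod_list (map (?Y \<omega>) (take q zs))" for \<omega>
  proof -
    have "(\<Prod>j\<in>{0..<q}. h (X (\<Sum>l\<in>{1..j}. i l) \<omega>)) = (\<Prod>j\<in>{0..<q}. ?Y \<omega> (zs ! j))"
      using partial_sums q by (intro prod.cong) simp_all
    also have "\<dots> = prod_list (map (?Y \<omega>) (take q zs))"
      by (rule prod_list_map_take[symmetric]) (use q in \<open>simp add: zs_def\<close>)
    finally show ?thesis .
  qed
  have second: "(\<Prod>j\<in>{q..length ys - 1}. h (X (\<Sum>l\<in>{1..j}. i l) \<omega>)) = prod_list (map (?Y \<omega>) (drop q zs))" for \<omega>
  proof -
    have "{q..length ys - 1} = {q..<length ys}" using q by auto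
    then have "(\<Prod>j\<in>{q..length ys - 1}. h (X (\<Sum>l\<in>{1..j}. i l) \<omega>)) = (\<Prod>j\<in>{q..<length zs}. ?Y \<omega> (zs ! j))"
      using partial_sums by (simp add: zs_def)
    also have "\<dots> = prod_list (map (?Y \<omega>) (drop q zs))"
      by (rule prod_list_map_drop[symmetric]) (use q in \<open>simp add: zs_def\<close>)
    finally show ?thesis .
  qed
  have whole: "prod_list (map (?Y \<omega>) (take q zs)) * prod_list (map (?Y \<omega>) (drop q zs)) = prod_list (map (?Y \<omega>) zs)" for \<omega>
    by (metis append_take_drop_id map_append prod_list.append)
  have "\<bar>moment h zs - moment h (take q zs) * moment h (drop q zs)\<bar> \<le> B * \<Theta> (i q)"
    using cov_bound[of q i] q unfolding cov_def first second whole moment_def by simp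
  moreover have "moment h zs = moment h ys" "moment h (take q zs) = moment h (take q ys)"
    "moment h (drop q zs) = moment h (drop q ys)"
    unfolding zs_def take_map drop_map using ge
    by (auto intro!: moment_shift[OF hm, symmetric] dest: in_set_takeD in_set_dropD)
  moreover have "i q = ys ! q - ys ! (q - 1)"
    using ys q ge[of "ys ! (q - 1)"] nth_zs[of q] nth_zs[of "q - 1"]
    unfolding i_def by (simp add: sorted_iff_nth_mono)
  ultimately show ?thesis by simp
qed

definition sorted_moment_sum :: "('d \<Rightarrow> real) \<Rightarrow> nat \<Rightarrow> nat \<Rightarrow> real" where
  "sorted_moment_sum h n m = (\<Sum>ys\<in>sorted_index_lists m {1..n}. \<bar>moment h ys\<bar>)"

lemma sorted_moment_sum_nonneg: "0 \<le> sorted_moment_sum h n m"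
  unfolding sorted_moment_sum_def by (rule sum_nonneg) simp

text \<open>For centred h the single moments vanish, by stationarity.\<close>
lemma sorted_moment_sum_one:
  fixes h :: "'d \<Rightarrow> real"
  assumes hm: "h \<in> borel_measurable borel" and centred: "(\<integral>\<omega>. h (X 0 \<omega>) \<partial>M) = 0"
  shows "sorted_moment_sum h n 1 = 0"
  unfolding sorted_moment_sum_def
proof (rule sum.neutral, rule ballI)
  fix ys assume "ys \<in> sorted_index_lists 1 {1..n}"
  then obtain i where ys: "ys = [i]" unfolding sorted_index_lists_def by (auto simp: length_Suc_conv)
  have "moment h [i] = moment h [0]" using moment_shift[OF hm, of "[i]" i] by simp
  then show "\<bar>moment h ys\<bar> = 0" using ys centred unfolding moment_def by simp
qed

text \<open>Splitting a sorted list at its largest gap.\<close>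
lemma moment_max_gap_bound:
  fixes h :: "'d \<Rightarrow> real" and \<Theta> :: "nat \<Rightarrow> real"
  assumes cov_bound: "\<And>i q. q \<in> {1..m - 1} \<Longrightarrow>
      \<bar>cov M (\<lambda>\<omega>. \<Prod>j\<in>{0..<q}. h (X (\<Sum>l\<in>{1..j}. i l) \<omega>))
              (\<lambda>\<omega>. \<Prod>j\<in>{q..m - 1}. h (X (\<Sum>l\<in>{1..j}. i l) \<omega>))\<bar> \<le> B * \<Theta> (i q)"
    and hm: "h \<in> borel_measurable borel" and m: "2 \<le> m" and ys: "ys \<in> sorted_index_lists m {1..n}"
  shows "\<bar>moment h ys\<bar> \<le> B * \<Theta> (list_max (gaps ys))
           + (\<Sum>q\<in>{1..<m}. \<bar>moment h (take q ys)\<bar> * \<bar>moment h (drop q ys)\<bar>)"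
proof -
  have s: "sorted ys" "length ys = m" using ys unfolding sorted_index_lists_def by simp_all
  have "gaps ys \<noteq> []" using s m by (simp add: gaps_def)
  then obtain j where j: "j < m - 1" "gaps ys ! j = list_max (gaps ys)"
    using list_max_mem s by (metis in_set_conv_nth length_gaps)
  define q where "q = Suc j"
  have q: "1 \<le> q" "q < m" using j m unfolding q_def by simp_all
  have "\<bar>moment h ys - moment h (take q ys) * moment h (drop q ys)\<bar> \<le> B * \<Theta> (ys ! q - ys ! (q - 1))"
    by (rule moment_split_bound[OF _ hm s(1)]) (use cov_bound s q in simp_all)
  also have "ys ! q - ys ! (q - 1) = list_max (gaps ys)" using j s nth_gaps[of j ys] unfolding q_def by simp
  finally have split: "\<bar>moment h ys - moment h (take q ys) * moment h (drop q ys)\<bar> \<le> B * \<Theta> (list_max (gaps ys))" .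
  have "\<bar>moment h (take q ys)\<bar> * \<bar>moment h (drop q ys)\<bar>
      \<le> (\<Sum>q\<in>{1..<m}. \<bar>moment h (take q ys)\<bar> * \<bar>moment h (drop q ys)\<bar>)"
    by (rule member_le_sum) (use q in simp_all)
  then show ?thesis using split abs_triangle_ineq2[of "moment h ys" "moment h (take q ys) * moment h (drop q ys)"]
    by (simp add: abs_mult)
qed

lemma sum_split_products_le:
  fixes h :: "'d \<Rightarrow> real"
  assumes q: "q \<le> m"
  shows "(\<Sum>ys\<in>sorted_index_lists m {1..n}. \<bar>moment h (take q ys)\<bar> * \<bar>moment h (drop q ys)\<bar>)
      \<le> sorted_moment_sum h n q * sorted_moment_sum h n (m - q)"
proof -
  let ?split = "\<lambda>ys. (take q ys, drop q ys)"
  have inj: "inj_on ?split (sorted_index_lists m {1..n})"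
    by (rule inj_onI) (metis append_take_drop_id prod.inject)
  have img: "?split ` sorted_index_lists m {1..n} \<subseteq> sorted_index_lists q {1..n} \<times> sorted_index_lists (m - q) {1..n}"
    using q by (auto simp: sorted_index_lists_def sorted_wrt_take sorted_wrt_drop
        dest: in_set_takeD in_set_dropD)
  have "(\<Sum>ys\<in>sorted_index_lists m {1..n}. \<bar>moment h (take q ys)\<bar> * \<bar>moment h (drop q ys)\<bar>)
      = (\<Sum>z\<in>?split ` sorted_index_lists m {1..n}. \<bar>moment h (fst z)\<bar> * \<bar>moment h (snd z)\<bar>)"
    by (subst sum.reindex[OF inj]) (simp add: comp_def)
  also have "\<dots> \<le> (\<Sum>z\<in>sorted_index_lists q {1..n} \<times> sorted_index_lists (m - q) {1..n}. \<bar>moment h (fst z)\<bar> * \<bar>moment h (snd z)\<bar>)"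
    by (rule sum_mono2[OF _ img]) (simp_all add: finite_sorted_index_lists)
  also have "\<dots> = sorted_moment_sum h n q * sorted_moment_sum h n (m - q)"
    unfolding sorted_moment_sum_def sum_product sum.cartesian_product by (simp add: case_prod_beta)
  finally show ?thesis .
qed

lemma sorted_moment_sum_recursion:
  fixes h :: "'d \<Rightarrow> real" and \<Theta> :: "nat \<Rightarrow> real"
  assumes cov_bound: "\<And>i q. q \<in> {1..m - 1} \<Longrightarrow>
      \<bar>cov M (\<lambda>\<omega>. \<Prod>j\<in>{0..<q}. h (X (\<Sum>l\<in>{1..j}. i l) \<omega>))
              (\<lambda>\<omega>. \<Prod>j\<in>{q..m - 1}. h (X (\<Sum>l\<in>{1..j}. i l) \<omega>))\<bar> \<le> B * \<Theta> (i q)"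
    and hm: "h \<in> borel_measurable borel" and m: "2 \<le> m" and B: "0 \<le> B" and nn: "\<And>i. 0 \<le> \<Theta> i"
  shows "sorted_moment_sum h n m \<le> B * (real n * (real (m - 1) * (\<Sum>r\<in>{0..n}. (real r + 1) ^ (m - 2) * \<Theta> r)))
           + (\<Sum>q\<in>{1..<m}. sorted_moment_sum h n q * sorted_moment_sum h n (m - q))"
proof -
  let ?S = "sorted_index_lists m {1..n}"
  have "sorted_moment_sum h n m
      \<le> (\<Sum>ys\<in>?S. B * \<Theta> (list_max (gaps ys)) + (\<Sum>q\<in>{1..<m}. \<bar>moment h (take q ys)\<bar> * \<bar>moment h (drop q ys)\<bar>))"
    unfolding sorted_moment_sum_def by (rule sum_mono) (rule moment_max_gap_bound[OF cov_bound hm m])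
  also have "\<dots> = B * (\<Sum>ys\<in>?S. \<Theta> (list_max (gaps ys)))
      + (\<Sum>q\<in>{1..<m}. \<Sum>ys\<in>?S. \<bar>moment h (take q ys)\<bar> * \<bar>moment h (drop q ys)\<bar>)"
    by (simp only: sum.distrib sum_distrib_left sum.swap[of _ ?S])
  also have "\<dots> \<le> B * (real n * (real (m - 1) * (\<Sum>r\<in>{0..n}. (real r + 1) ^ (m - 2) * \<Theta> r)))
      + (\<Sum>q\<in>{1..<m}. sorted_moment_sum h n q * sorted_moment_sum h n (m - q))"
    by (intro add_mono mult_left_mono sum_max_gap_le sum_mono sum_split_products_le) (use m B nn in simp_all)
  finally show ?thesis .
qed

lemma power_moment_le:
  fixes h :: "'d \<Rightarrow> real"
  assumes hm: "h \<in> borel_measurable borel" and hb: "\<And>x. \<bar>h x\<bar> \<le> 1"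
  shows "(\<integral>\<omega>. (\<Sum>i\<in>{1..n}. h (X i \<omega>)) ^ m \<partial>M) \<le> fact m * sorted_moment_sum h n m"
proof -
  have sort_invariant: "moment h (sort xs) = moment h xs" for xs
    unfolding moment_def by (simp only: prod_mset_prod_list[symmetric] mset_map mset_sort)
  have "(\<integral>\<omega>. (\<Sum>i\<in>{1..n}. h (X i \<omega>)) ^ m \<partial>M) = (\<Sum>xs\<in>index_lists m {1..n}. moment h xs)"
    unfolding power_sum_index_lists[OF finite_atLeastAtMost] moment_def
    by (simp add: integrable_prod_list[OF hm hb])
  also have "\<dots> \<le> (\<Sum>xs\<in>index_lists m {1..n}. \<bar>moment h (sort xs)\<bar>)"
    unfolding sort_invariant by (rule sum_mono) simp
  also have "\<dots> \<le> fact m * sorted_moment_sum h n m"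
    unfolding sorted_moment_sum_def by (rule sum_sort_le) simp_all
  finally show ?thesis .
qed

end

section \<open>The multiple mixing hypotheses\<close>

lemma Lr_norm_scale:
  assumes "0 < r"
  shows "Lr_norm M r (\<lambda>\<omega>. c * Y \<omega>) = \<bar>c\<bar> * Lr_norm M r Y"
proof -
  have "(\<lambda>\<omega>. \<bar>c * Y \<omega>\<bar> powr r) = (\<lambda>\<omega>. \<bar>c\<bar> powr r * \<bar>Y \<omega>\<bar> powr r)"
    by (simp add: abs_mult powr_mult)
  moreover have "0 \<le> (\<integral>\<omega>. \<bar>Y \<omega>\<bar> powr r \<partial>M)" by (rule integral_nonneg_AE) simp
  moreover have "(\<bar>c\<bar> powr r) powr (1 / r) = \<bar>c\<bar>" using assms by (simp add: powr_powr)
  ultimately show ?thesis unfolding Lr_norm_def by (simp add: powr_mult)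
qed

lemma extremes_le_power_sum:
  fixes a b :: real
  assumes "0 \<le> b" "2 \<le> a" "1 \<le> p"
  shows "b + b ^ p \<le> (\<Sum>i\<in>{1..p}. (a * b) ^ i)"
proof -
  have "1 * b \<le> a * b" by (rule mult_right_mono) (use assms in simp_all)
  then have ab: "b \<le> a * b" by simp
  show ?thesis
  proof (cases "p = 1")
    case True then show ?thesis using mult_right_mono[OF assms(2,1)] by simp
  next
    case False
    have "b ^ p \<le> (a * b) ^ p" using ab assms(1) by (rule power_mono)
    with ab False have "b + b ^ p \<le> (\<Sum>i\<in>{1, p}. (a * b) ^ i)" by simp
    also have "\<dots> \<le> (\<Sum>i\<in>{1..p}. (a * b) ^ i)"
      by (rule sum_mono2) (use assms in auto)
    finally show ?thesis .
  qed
qed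

lemma even_power_double_sum:
  fixes y :: "nat \<Rightarrow> real"
  shows "\<bar>\<Sum>i\<in>A. 2 * y i\<bar> ^ (2 * p) = 4 ^ p * (\<Sum>i\<in>A. y i) ^ (2 * p)"
  by (simp add: power_even_abs sum_distrib_left[symmetric] power_mult_distrib power_mult)

locale mixing_process = stationary_process M X
  for M :: "'a measure" and X :: "nat \<Rightarrow> 'a \<Rightarrow> 'd::euclidean_space" +
  fixes G :: "('d \<Rightarrow> real) set" and nG :: "('d \<Rightarrow> real) \<Rightarrow> real"
    and \<Theta> :: "nat \<Rightarrow> real" and r :: real
  assumes function_space: "seminormed_function_space G nG"
    and mixing: "multiple_mixing M X G nG \<Theta> r"
begin

lemma G_measurable: "h \<in> G \<Longrightarrow> h \<in> borel_measurable borel"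
  using function_space unfolding seminormed_function_space_def by blast

lemma G_const: "(\<lambda>_. c) \<in> G"
  and G_add: "f \<in> G \<Longrightarrow> g \<in> G \<Longrightarrow> (\<lambda>x. f x + g x) \<in> G"
  and G_scale: "f \<in> G \<Longrightarrow> (\<lambda>x. c * f x) \<in> G"
  and nG_scale: "f \<in> G \<Longrightarrow> nG (\<lambda>x. c * f x) = \<bar>c\<bar> * nG f"
  using function_space unfolding seminormed_function_space_def by blast+

lemma r_ge_1: "1 \<le> r" and Theta_nonneg: "0 \<le> \<Theta> i"
  using mixing unfolding multiple_mixing_def by blast+

definition centred_unit :: "('d \<Rightarrow> real) set" where
  "centred_unit = {h\<in>G. (\<forall>x. \<bar>h x\<bar> \<le> 1) \<and> (\<integral>\<omega>. h (X 0 \<omega>) \<partial>M) = 0}"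

definition mixing_size :: "('d \<Rightarrow> real) \<Rightarrow> real" where
  "mixing_size h = Lr_norm M r (\<lambda>\<omega>. h (X 0 \<omega>)) * nG h"

lemma mixing_size_nonneg: "h \<in> G \<Longrightarrow> 0 \<le> mixing_size h"
  using function_space unfolding mixing_size_def Lr_norm_def seminormed_function_space_def by simp

lemma uniform_mixing_constant:
  fixes P :: nat
  obtains K where "0 \<le> K"
    and "\<And>m h i q. m \<in> {2..P} \<Longrightarrow> h \<in> centred_unit \<Longrightarrow> q \<in> {1..m - 1} \<Longrightarrow>
      \<bar>cov M (\<lambda>\<omega>. \<Prod>j\<in>{0..<q}. h (X (\<Sum>l\<in>{1..j}. i l) \<omega>))
              (\<lambda>\<omega>. \<Prod>j\<in>{q..m - 1}. h (X (\<Sum>l\<in>{1..j}. i l) \<omega>))\<bar> \<le> (K * mixing_size h) * \<Theta> (i q)"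
proof -
  define bound where "bound p K \<longleftrightarrow> (\<forall>h\<in>G. (\<forall>x. \<bar>h x\<bar> \<le> 1) \<longrightarrow> (\<integral>\<omega>. h (X 0 \<omega>) \<partial>M) = 0 \<longrightarrow>
        (\<forall>i::nat \<Rightarrow> nat. \<forall>q\<in>{1..p}.
          \<bar>cov M (\<lambda>\<omega>. \<Prod>j\<in>{0..<q}. h (X (\<Sum>l\<in>{1..j}. i l) \<omega>))
                  (\<lambda>\<omega>. \<Prod>j\<in>{q..p}. h (X (\<Sum>l\<in>{1..j}. i l) \<omega>))\<bar>
          \<le> K * Lr_norm M r (\<lambda>\<omega>. h (X 0 \<omega>)) * nG h * \<Theta> (i q)))" for p :: nat and K :: real
  define Kp where "Kp p = (SOME K. bound p K)" for p
  have "\<exists>K. bound p K" if "p \<ge> 1" for p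
    using mixing that unfolding multiple_mixing_def bound_def by blast
  then have Kp: "bound p (Kp p)" if "p \<ge> 1" for p
    unfolding Kp_def using that by (blast intro: someI_ex)
  define K where "K = (\<Sum>p\<in>{1..P}. \<bar>Kp p\<bar>)"
  show thesis
  proof (rule that)
    show "0 \<le> K" unfolding K_def by (rule sum_nonneg) simp
    fix m h i q assume m: "m \<in> {2..P}" and h: "h \<in> centred_unit" and q: "q \<in> {1..m - 1}"
    have hG: "h \<in> G" using h unfolding centred_unit_def by simp
    have "bound (m - 1) (Kp (m - 1))" using m by (intro Kp) auto
    then have "\<bar>cov M (\<lambda>\<omega>. \<Prod>j\<in>{0..<q}. h (X (\<Sum>l\<in>{1..j}. i l) \<omega>))
              (\<lambda>\<omega>. \<Prod>j\<in>{q..m - 1}. h (X (\<Sum>l\<in>{1..j}. i l) \<omega>))\<bar>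
        \<le> Kp (m - 1) * Lr_norm M r (\<lambda>\<omega>. h (X 0 \<omega>)) * nG h * \<Theta> (i q)"
      using h q unfolding bound_def centred_unit_def by blast
    also have "\<dots> = Kp (m - 1) * (mixing_size h * \<Theta> (i q))" by (simp add: mixing_size_def mult_ac)
    also have "\<dots> \<le> K * (mixing_size h * \<Theta> (i q))"
    proof (rule mult_right_mono)
      have "\<bar>Kp (m - 1)\<bar> \<le> K" unfolding K_def by (rule member_le_sum) (use m in auto)
      then show "Kp (m - 1) \<le> K" by simp
    qed (simp add: mixing_size_nonneg[OF hG] Theta_nonneg)
    finally show "\<bar>cov M (\<lambda>\<omega>. \<Prod>j\<in>{0..<q}. h (X (\<Sum>l\<in>{1..j}. i l) \<omega>))
              (\<lambda>\<omega>. \<Prod>j\<in>{q..m - 1}. h (X (\<Sum>l\<in>{1..j}. i l) \<omega>))\<bar> \<le> (K * mixing_size h) * \<Theta> (i q)"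
      by (simp only: mult.assoc)
  qed
qed

text \<open>The moment recursion with a constant c that does not depend on n or h: the
  weighted sum of Theta over the largest gaps is controlled by the summability of
  i^k Theta(i), for block lengths m <= k + 2.\<close>
lemma centred_recursion:
  assumes summable: "summable (\<lambda>i. real i ^ k * \<Theta> i)"
  obtains c where "0 \<le> c"
    and "\<And>m h n. 2 \<le> m \<Longrightarrow> m \<le> k + 2 \<Longrightarrow> h \<in> centred_unit \<Longrightarrow>
      sorted_moment_sum h n m \<le> c * (real n * mixing_size h)
        + (\<Sum>q\<in>{1..<m}. sorted_moment_sum h n q * sorted_moment_sum h n (m - q))"
proof -
  obtain K where K0: "0 \<le> K" and K: "\<And>m h i q. m \<in> {2..k + 2} \<Longrightarrow> h \<in> centred_unit \<Longrightarrow> q \<in> {1..m - 1} \<Longrightarrow>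
      \<bar>cov M (\<lambda>\<omega>. \<Prod>j\<in>{0..<q}. h (X (\<Sum>l\<in>{1..j}. i l) \<omega>))
              (\<lambda>\<omega>. \<Prod>j\<in>{q..m - 1}. h (X (\<Sum>l\<in>{1..j}. i l) \<omega>))\<bar> \<le> (K * mixing_size h) * \<Theta> (i q)"
    using uniform_mixing_constant[of "k + 2"] by blast
  define T where "T = \<Theta> 0 + 2 ^ k * (\<Sum>i. real i ^ k * \<Theta> i)"
  have T0: "0 \<le> T"
    unfolding T_def by (intro add_nonneg_nonneg mult_nonneg_nonneg suminf_nonneg summable)
      (simp_all add: Theta_nonneg)
  show thesis
  proof (rule that[of "K * real (k + 2) * T"])
    show "0 \<le> K * real (k + 2) * T" using K0 T0 by simp
    fix m h n assume m: "2 \<le> m" "m \<le> k + 2" and h: "h \<in> centred_unit"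
    have hG: "h \<in> G" using h unfolding centred_unit_def by simp
    let ?S = "\<Sum>r\<in>{0..n}. (real r + 1) ^ (m - 2) * \<Theta> r"
    have "?S \<le> T" unfolding T_def
      by (rule weighted_sum_le_series[OF Theta_nonneg summable]) (use m in simp)
    moreover have "0 \<le> ?S" by (intro sum_nonneg) (simp add: Theta_nonneg)
    ultimately have "real (m - 1) * ?S \<le> real (k + 2) * T" using m T0 by (intro mult_mono) simp_all
    then have "(real (m - 1) * ?S) * (K * (real n * mixing_size h)) \<le> (real (k + 2) * T) * (K * (real n * mixing_size h))"
      by (rule mult_right_mono) (use K0 mixing_size_nonneg[OF hG] in simp)
    then have "(K * mixing_size h) * (real n * (real (m - 1) * ?S)) \<le> K * real (k + 2) * T * (real n * mixing_size h)"
      by (simp add: mult_ac)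
    moreover have "sorted_moment_sum h n m \<le> (K * mixing_size h) * (real n * (real (m - 1) * ?S))
        + (\<Sum>q\<in>{1..<m}. sorted_moment_sum h n q * sorted_moment_sum h n (m - q))"
      using h m K0 mixing_size_nonneg[OF hG] Theta_nonneg
      by (intro sorted_moment_sum_recursion[OF K G_measurable]) (auto simp: centred_unit_def)
    ultimately show "sorted_moment_sum h n m \<le> K * real (k + 2) * T * (real n * mixing_size h)
        + (\<Sum>q\<in>{1..<m}. sorted_moment_sum h n q * sorted_moment_sum h n (m - q))"
      by linarith
  qed
qed

lemma centred_moment_bound:
  assumes summable: "summable (\<lambda>i. real i ^ k * \<Theta> i)"
  obtains D where "0 \<le> D"
    and "\<And>h n. h \<in> centred_unit \<Longrightarrow> sorted_moment_sum h n (k + 2)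
      \<le> D * (real n * mixing_size h + (real n * mixing_size h) ^ ((k + 2) div 2))"
proof -
  obtain c where c0: "0 \<le> c" and rec: "\<And>m h n. 2 \<le> m \<Longrightarrow> m \<le> k + 2 \<Longrightarrow> h \<in> centred_unit \<Longrightarrow>
      sorted_moment_sum h n m \<le> c * (real n * mixing_size h)
        + (\<Sum>q\<in>{1..<m}. sorted_moment_sum h n q * sorted_moment_sum h n (m - q))"
    using centred_recursion[OF summable] by blast
  have "\<exists>D\<ge>0. \<forall>h\<in>centred_unit. \<forall>n. sorted_moment_sum h n (k + 2)
      \<le> D * (real n * mixing_size h + (real n * mixing_size h) ^ ((k + 2) div 2))"
  proof (rule recursion_bound[where A = sorted_moment_sum and b = "\<lambda>h n. real n * mixing_size h", OF rec])
    show "sorted_moment_sum h n 1 = 0" if "h \<in> centred_unit" for h n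
      using that by (intro sorted_moment_sum_one) (auto simp: centred_unit_def G_measurable)
  qed (auto simp: centred_unit_def sorted_moment_sum_nonneg mixing_size_nonneg c0)
  then show thesis using that by blast
qed

lemma centred_sum_moment_bound:
  assumes summable: "summable (\<lambda>i. real i ^ (2 * p - 2) * \<Theta> i)" and p: "1 \<le> p"
  obtains D where "0 \<le> D"
    and "\<And>h n. h \<in> centred_unit \<Longrightarrow> (\<integral>\<omega>. (\<Sum>i\<in>{1..n}. h (X i \<omega>)) ^ (2 * p) \<partial>M)
      \<le> D * (real n * mixing_size h + (real n * mixing_size h) ^ p)"
proof -
  have p2: "2 * p - 2 + 2 = 2 * p" "2 * p div 2 = p" using p by simp_all
  obtain D where D0: "0 \<le> D" and D: "\<And>h n. h \<in> centred_unit \<Longrightarrow> sorted_moment_sum h n (2 * p)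
      \<le> D * (real n * mixing_size h + (real n * mixing_size h) ^ p)"
    using centred_moment_bound[OF summable, unfolded p2] by blast
  show thesis
  proof (rule that[of "fact (2 * p) * D"])
    show "0 \<le> fact (2 * p) * D" using D0 by simp
    fix h n assume h: "h \<in> centred_unit"
    have "(\<integral>\<omega>. (\<Sum>i\<in>{1..n}. h (X i \<omega>)) ^ (2 * p) \<partial>M) \<le> fact (2 * p) * sorted_moment_sum h n (2 * p)"
      using h by (intro power_moment_le) (auto simp: centred_unit_def G_measurable)
    also have "\<dots> \<le> fact (2 * p) * (D * (real n * mixing_size h + (real n * mixing_size h) ^ p))"
      using D[OF h, of n] by (intro mult_left_mono) simp_all
    finally show "(\<integral>\<omega>. (\<Sum>i\<in>{1..n}. h (X i \<omega>)) ^ (2 * p) \<partial>M)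
      \<le> fact (2 * p) * D * (real n * mixing_size h + (real n * mixing_size h) ^ p)"
      by (simp only: mult.assoc)
  qed
qed

lemma centring:
  assumes fG: "f \<in> G" and fb: "\<forall>x. \<bar>f x\<bar> \<le> 1"
  defines "c0 \<equiv> \<integral>\<omega>. f (X 0 \<omega>) \<partial>M"
  shows "(\<lambda>x. (f x - c0) / 2) \<in> centred_unit"
    and "Lr_norm M r (\<lambda>\<omega>. f (X 0 \<omega>) - c0) * nG (\<lambda>x. f x - c0) = 4 * mixing_size (\<lambda>x. (f x - c0) / 2)"
    and "\<bar>\<Sum>i\<in>A. f (X i \<omega>) - c0\<bar> ^ (2 * p) = 4 ^ p * (\<Sum>i\<in>A. (f (X i \<omega>) - c0) / 2) ^ (2 * p)"
proof -
  interpret prob_space M by (rule prob)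
  define g where "g = (\<lambda>x. (f x - c0) / 2)"
  have double: "f x - c0 = 2 * g x" for x unfolding g_def by simp
  have "(\<lambda>x. (1 / 2) * (f x + (\<lambda>_. - c0) x)) \<in> G" by (intro G_scale G_add fG G_const)
  moreover have "(\<lambda>x. (1 / 2) * (f x + (\<lambda>_. - c0) x)) = g" unfolding g_def by (rule ext) simp
  ultimately have gG: "g \<in> G" by simp
  have "\<bar>c0\<bar> \<le> 1" unfolding c0_def using abs_moment_le_1[of f "[0]"] fb by (simp add: moment_def)
  then have "\<bar>f x - c0\<bar> \<le> 2" for x using fb[rule_format, of x] by arith
  then have "\<forall>x. \<bar>g x\<bar> \<le> 1" unfolding g_def by simp
  moreover have "(\<integral>\<omega>. g (X 0 \<omega>) \<partial>M) = 0"
    using integrable_prod_list[OF G_measurable[OF fG], of "[0]"] fb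
    unfolding g_def c0_def by (simp add: prob_space)
  ultimately show "(\<lambda>x. (f x - c0) / 2) \<in> centred_unit"
    using gG unfolding centred_unit_def g_def by simp
  have "nG (\<lambda>x. f x - c0) = 2 * nG g" using nG_scale[OF gG, of 2] by (simp add: double)
  moreover have "Lr_norm M r (\<lambda>\<omega>. f (X 0 \<omega>) - c0) = 2 * Lr_norm M r (\<lambda>\<omega>. g (X 0 \<omega>))"
    using Lr_norm_scale[of r M 2] r_ge_1 by (simp add: double)
  ultimately show "Lr_norm M r (\<lambda>\<omega>. f (X 0 \<omega>) - c0) * nG (\<lambda>x. f x - c0) = 4 * mixing_size (\<lambda>x. (f x - c0) / 2)"
    unfolding mixing_size_def g_def[symmetric] by simp
  have "(\<Sum>i\<in>A. f (X i \<omega>) - c0) = (\<Sum>i\<in>A. 2 * g (X i \<omega>))" by (simp only: double)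
  then show "\<bar>\<Sum>i\<in>A. f (X i \<omega>) - c0\<bar> ^ (2 * p) = 4 ^ p * (\<Sum>i\<in>A. (f (X i \<omega>) - c0) / 2) ^ (2 * p)"
    unfolding g_def by (simp only: even_power_double_sum)
qed

end

theorem proposition1:
  fixes M :: "'a measure" and X :: "nat \<Rightarrow> 'a \<Rightarrow> 'd::euclidean_space"
    and G :: "('d \<Rightarrow> real) set" and nG :: "('d \<Rightarrow> real) \<Rightarrow> real"
    and \<Theta> :: "nat \<Rightarrow> real" and r :: real and p :: nat
  assumes "prob_space M"
    and "\<And>n. X n \<in> borel_measurable M"
    and "seminormed_function_space G nG"
    and "stationary M X"
    and "multiple_mixing M X G nG \<Theta> r"
    and "p \<ge> 1"
    and "summable (\<lambda>i. real i ^ (2 * p - 2) * \<Theta> i)"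
  shows "\<exists>C>0. \<forall>f\<in>G. (\<forall>x. \<bar>f x\<bar> \<le> 1) \<longrightarrow> (\<forall>n::nat. n \<ge> 1 \<longrightarrow>
           (\<integral>\<omega>. \<bar>\<Sum>i\<in>{1..n}. f (X i \<omega>) - (\<integral>\<omega>'. f (X 0 \<omega>') \<partial>M)\<bar> ^ (2 * p) \<partial>M)
           \<le> C * (\<Sum>i\<in>{1..p}. real n ^ i
                 * Lr_norm M r (\<lambda>\<omega>. f (X 0 \<omega>) - (\<integral>\<omega>'. f (X 0 \<omega>') \<partial>M)) ^ i
                 * nG (\<lambda>x. f x - (\<integral>\<omega>'. f (X 0 \<omega>') \<partial>M)) ^ i))"
proof -
  interpret mixing_process M X G nG \<Theta> r
    by (intro mixing_process.intro stationary_process.intro mixing_process_axioms.intro assms(1-5))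
  obtain D where D0: "0 \<le> D" and D: "\<And>h n. h \<in> centred_unit \<Longrightarrow>
      (\<integral>\<omega>. (\<Sum>i\<in>{1..n}. h (X i \<omega>)) ^ (2 * p) \<partial>M) \<le> D * (real n * mixing_size h + (real n * mixing_size h) ^ p)"
    using centred_sum_moment_bound[OF assms(7,6)] by blast
  define C where "C = 4 ^ p * D + 1"
  have "(\<integral>\<omega>. \<bar>\<Sum>i\<in>{1..n}. f (X i \<omega>) - c0\<bar> ^ (2 * p) \<partial>M)
      \<le> C * (\<Sum>i\<in>{1..p}. real n ^ i * Lr_norm M r (\<lambda>\<omega>. f (X 0 \<omega>) - c0) ^ i * nG (\<lambda>x. f x - c0) ^ i)"
    if fG: "f \<in> G" and fb: "\<forall>x. \<bar>f x\<bar> \<le> 1" and c0: "c0 = (\<integral>\<omega>. f (X 0 \<omega>) \<partial>M)" for f n c0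
  proof -
    define g where "g = (\<lambda>x. (f x - c0) / 2)"
    define b where "b = real n * mixing_size g"
    note centred = centring[OF fG fb, folded c0, folded g_def]
    have four_b: "4 * b = real n * (Lr_norm M r (\<lambda>\<omega>. f (X 0 \<omega>) - c0) * nG (\<lambda>x. f x - c0))"
      unfolding b_def centred(2) by simp
    have b0: "0 \<le> b" using centred(1) mixing_size_nonneg unfolding b_def centred_unit_def by simp
    have "(\<integral>\<omega>. \<bar>\<Sum>i\<in>{1..n}. f (X i \<omega>) - c0\<bar> ^ (2 * p) \<partial>M) = 4 ^ p * (\<integral>\<omega>. (\<Sum>i\<in>{1..n}. g (X i \<omega>)) ^ (2 * p) \<partial>M)"
      by (simp add: centred(3) g_def)
    also have "\<dots> \<le> 4 ^ p * D * (b + b ^ p)"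
      using D[OF centred(1), of n] unfolding b_def by simp
    also have "\<dots> \<le> C * (\<Sum>i\<in>{1..p}. (4 * b) ^ i)"
      unfolding C_def using extremes_le_power_sum[OF b0 _ assms(6), of 4] b0 D0
      by (intro mult_mono) simp_all
    also have "(\<Sum>i\<in>{1..p}. (4 * b) ^ i) = (\<Sum>i\<in>{1..p}. real n ^ i * Lr_norm M r (\<lambda>\<omega>. f (X 0 \<omega>) - c0) ^ i * nG (\<lambda>x. f x - c0) ^ i)"
      by (simp only: four_b power_mult_distrib mult.assoc)
    finally show ?thesis .
  qed
  moreover have "0 < C" unfolding C_def using D0 by (simp add: add_nonneg_pos)
  ultimately show ?thesis by blast
qed

end
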